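(* Let $q\in\mathbb{CP}^N$, $\alpha\in[0,\pi]$, and let $e_1,e_2,e_3,e_4\in T_q\mathbb{CP}^N$ be $g_{FS}$-orthonormal vectors satisfying $J_{FS}e_1=\cos\alpha\, e_2+\sin\alpha\, e_3$, $J_{FS}e_2=-\cos\alpha\, e_1-\sin\alpha\, e_4$, $J_{FS}e_3=-\sin\alpha\, e_1+\cos\alpha\, e_4$. Then there exists a Killing vector field $V$ of $(\mathbb{CP}^N,g_{FS})$ such that $$\big[\langle\bar\nabla_{e_1}V,e_3\rangle+\langle\bar\nabla_{e_2}V,e_4\rangle\big](q)=1\quad\text{and}\quad \tfrac{\sqrt2}{2}\le|\bar\nabla V|(q)\le\sqrt2 .$$ Moreover, for every real number $c$ there is a Killing vector field $V$ with $\big[\langle\bar\nabla_{e_1}V,e_3\rangle+\langle\bar\nabla_{e_2}V,e_4\rangle\big](q)=c$.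
   Context: $g_{FS}$, $J_{FS}$ are the Fubini–Study metric and complex structure on complex projective space $\mathbb{CP}^N$, $\langle\cdot,\cdot\rangle=g_{FS}$ and $\bar\nabla$ is its Levi-Civita connection; $|\bar\nabla V|(q)$ is the $g_{FS}$-norm of the endomorphism $X\mapsto\bar\nabla_XV$ of $T_q\mathbb{CP}^N$. *)

theory Defs
  imports "HOL-Analysis.Analysis"
begin

text \<open>Concrete model of (CP^N, g_FS, J_FS) as the quotient of the unit sphere
S in C^(N+1) (here complex^'n, N+1 = CARD('n)) by the circle action.
A point q = [z] is represented by a unit vector z; T_q CP^N is identified
(via the differential of the projection) with the horizontal space
H_z = {v. herm z v = 0}; g_FS is the real inner product (Re of the
Hermitian product) and J_FS is multiplication by i.\<close>

definition herm :: "complex^'n \<Rightarrow> complex^'n \<Rightarrow> complex" where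
  "herm z w = (\<Sum>i\<in>UNIV. cnj (z $ i) * w $ i)"

definition sphere_pts :: "(complex^'n) set" where
  "sphere_pts = {z. norm z = 1}"

definition horiz :: "complex^'n \<Rightarrow> (complex^'n) set" where
  "horiz z = {v. herm z v = 0}"

definition hproj :: "complex^'n \<Rightarrow> complex^'n \<Rightarrow> complex^'n" where
  "hproj z w = w - herm z w *s z"

definition JFS :: "complex^'n \<Rightarrow> complex^'n" where
  "JFS v = \<i> *s v"

text \<open>A C^1 vector field on CP^N, given by its horizontal, circle-equivariant
lift Vh to the sphere (extended arbitrarily, C^1 near the sphere).\<close>
definition is_vector_field :: "(complex^'n \<Rightarrow> complex^'n) \<Rightarrow> bool" where
  "is_vector_field Vh \<longleftrightarrow>
     (\<forall>z\<in>sphere_pts. herm z (Vh z) = 0) \<and>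
     (\<forall>z\<in>sphere_pts. \<forall>c::complex. norm c = 1 \<longrightarrow> Vh (c *s z) = c *s Vh z) \<and>
     (\<exists>D. (\<forall>z\<in>sphere_pts. (Vh has_derivative blinfun_apply (D z)) (at z))
          \<and> continuous_on sphere_pts D)"

text \<open>Levi-Civita covariant derivative of g_FS: horizontal part of the
Euclidean derivative of the horizontal lift (O'Neill).\<close>
definition cov :: "(complex^'n \<Rightarrow> complex^'n) \<Rightarrow> complex^'n \<Rightarrow> complex^'n \<Rightarrow> complex^'n" where
  "cov Vh z X = hproj z (frechet_derivative Vh (at z) X)"

definition is_killing :: "(complex^'n \<Rightarrow> complex^'n) \<Rightarrow> bool" where
  "is_killing Vh \<longleftrightarrow> is_vector_field Vh \<and>
     (\<forall>z\<in>sphere_pts. \<forall>X\<in>horiz z. \<forall>Y\<in>horiz z.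
        inner (cov Vh z X) Y + inner (cov Vh z Y) X = 0)"

text \<open>g_FS-norm (Hilbert-Schmidt) of the endomorphism X \<mapsto> cov Vh z X of T_q.
Computed in the ambient real Euclidean space via X \<mapsto> cov Vh z (hproj z X),
which vanishes on the orthogonal complement of H_z and maps into H_z.\<close>
definition nabla_norm :: "(complex^'n \<Rightarrow> complex^'n) \<Rightarrow> complex^'n \<Rightarrow> real" where
  "nabla_norm Vh z = sqrt (\<Sum>b\<in>Basis. (norm (cov Vh z (hproj z b)))\<^sup>2)"

end

theory Submission
  imports Defs
begin

text \<open>
  A skew-Hermitian complex-linear map A of C^(N+1) (an element of u(N+1))
  generates a Killing field of CP^N; its horizontal lift is the horizontal part
  z \<mapsto> A z - \<langle>z, A z\<rangle> z of the linear field A.  If moreover A kills z and maps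
  into the horizontal space H_z, then at q = [z] the covariant derivative of this
  field is A itself, so \<nabla>V(q) can be read off from A.

  We use the rank-two operators R_r(w) = r (\<langle>e1,w\<rangle> e3 - \<langle>e3,w\<rangle> e1).  For the adapted
  frame of the theorem one computes \<langle>R_r e1, e3\<rangle> + \<langle>R_r e2, e4\<rangle> = 2r and, via a
  Parseval-type identity, |R_r|^2 = 4 r^2 (1 + sin^2 \<alpha>).  Taking r = 1/2 gives the
  value 1 with |\<nabla>V| = sqrt (1 + sin^2 \<alpha>) \<in> [1, sqrt 2], and r = c/2 gives the value c.
\<close>

subsection \<open>The Hermitian product\<close>

lemma herm_add_right: "herm z (x + y) = herm z x + herm z y"
  by (simp add: herm_def distrib_left sum.distrib)

lemma herm_add_left: "herm (x + y) w = herm x w + herm y w"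
  by (simp add: herm_def distrib_right sum.distrib)

lemma herm_diff_right: "herm z (x - y) = herm z x - herm z y"
  by (simp add: herm_def right_diff_distrib sum_subtractf)

lemma herm_diff_left: "herm (x - y) w = herm x w - herm y w"
  by (simp add: herm_def left_diff_distrib sum_subtractf)

lemma herm_smult_right: "herm z (a *s x) = a * herm z x"
  by (simp add: herm_def sum_distrib_left algebra_simps)

lemma herm_smult_left: "herm (a *s x) w = cnj a * herm x w"
  by (simp add: herm_def sum_distrib_left algebra_simps)

lemma herm_scaleR_right: "herm x (r *\<^sub>R w) = r *\<^sub>R herm x w"
  unfolding herm_def vector_scaleR_component
  by (simp add: scaleR_sum_right scaleR_conv_of_real algebra_simps sum_distrib_left)

lemma herm_scaleR_left: "herm (r *\<^sub>R x) w = r *\<^sub>R herm x w"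
  unfolding herm_def vector_scaleR_component
  by (simp add: scaleR_sum_right scaleR_conv_of_real algebra_simps sum_distrib_left)

lemma herm_zero_right [simp]: "herm z 0 = 0"
  by (simp add: herm_def)

lemma herm_zero_left [simp]: "herm 0 z = 0"
  by (simp add: herm_def)

lemma cnj_herm: "cnj (herm z w) = herm w z"
  by (simp add: herm_def mult.commute)

lemma inner_herm: "inner x y = Re (herm x y)"
  by (simp add: herm_def inner_vec_def Re_sum inner_complex_def)

lemma herm_eq: "herm x y = Complex (inner x y) (inner (JFS x) y)"
  by (simp add: complex_eq_iff inner_herm herm_def inner_vec_def Im_sum inner_complex_def JFS_def)

lemma inner_JJ: "inner (JFS x) (JFS y) = inner x y"
  by (simp add: JFS_def inner_vec_def inner_complex_def algebra_simps)

lemma inner_J_self: "inner x (JFS x) = 0"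
  by (simp add: JFS_def inner_vec_def inner_complex_def algebra_simps)

lemma inner_J_swap: "inner (JFS x) y = - inner x (JFS y)"
  by (simp add: JFS_def inner_vec_def inner_complex_def algebra_simps sum_negf[symmetric])

lemma herm_self_sphere: "z \<in> sphere_pts \<Longrightarrow> herm z z = 1"
  by (simp add: herm_eq complex_eq_iff sphere_pts_def inner_J_self inner_J_swap[of z z]
      flip: power2_norm_eq_inner)

lemma smult_decomp: "h *s w = Re h *\<^sub>R w + Im h *\<^sub>R JFS w"
  by (simp add: vec_eq_iff JFS_def complex_eq_iff)

text \<open>In finite dimension real-bilinear maps are bounded; this gives derivatives and
  continuity of expressions built from herm and scalar multiplication.\<close>

lemma bounded_bilinear_herm: "bounded_bilinear (herm :: complex^'n \<Rightarrow> _)"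
  unfolding bilinear_conv_bounded_bilinear[symmetric] bilinear_def
  by (auto intro!: linearI simp: herm_add_left herm_add_right herm_scaleR_left herm_scaleR_right)

lemma bounded_bilinear_smult: "bounded_bilinear (\<lambda>(c::complex) (x::complex^'n). c *s x)"
  unfolding bilinear_conv_bounded_bilinear[symmetric] bilinear_def
  by (auto intro!: linearI simp: vec_eq_iff vector_scaleR_component algebra_simps)

subsection \<open>Killing fields induced by skew-Hermitian maps\<close>

definition induced_field :: "(complex^'n \<Rightarrow> complex^'n) \<Rightarrow> complex^'n \<Rightarrow> complex^'n" where
  "induced_field A z = A z - herm z (A z) *s z"

definition induced_field_deriv ::
    "(complex^'n \<Rightarrow> complex^'n) \<Rightarrow> complex^'n \<Rightarrow> complex^'n \<Rightarrow> complex^'n" where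
  "induced_field_deriv A z h = A h - (herm z (A h) + herm h (A z)) *s z - herm z (A z) *s h"

lemma induced_field_has_derivative:
  assumes lin: "bounded_linear A"
  shows "(induced_field A has_derivative induced_field_deriv A z) (at z)"
proof -
  have dA: "(A has_derivative A) (at z)"
    using bounded_linear.has_derivative[OF lin has_derivative_ident] by simp
  have "((\<lambda>x. herm x (A x)) has_derivative (\<lambda>h. herm z (A h) + herm h (A z))) (at z)"
    using bounded_bilinear.FDERIV[OF bounded_bilinear_herm has_derivative_ident dA] .
  from bounded_bilinear.FDERIV[OF bounded_bilinear_smult this has_derivative_ident]
  have "((\<lambda>x. herm x (A x) *s x) has_derivative
          (\<lambda>h. herm z (A z) *s h + (herm z (A h) + herm h (A z)) *s z)) (at z)" .
  from has_derivative_diff[OF dA this] show ?thesis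
    unfolding induced_field_def induced_field_deriv_def
    by (rule has_derivative_eq_rhs) (auto simp: fun_eq_iff algebra_simps)
qed

lemma cov_induced_field:
  assumes "bounded_linear A"
  shows "cov (induced_field A) z X = hproj z (induced_field_deriv A z X)"
  using frechet_derivative_at[OF induced_field_has_derivative[OF assms, of z]]
  by (simp add: cov_def)

lemma is_vector_field_induced_field:
  fixes A :: "complex^'n \<Rightarrow> complex^'n"
  assumes lin: "bounded_linear A" and cl: "\<And>a w. A (a *s w) = a *s A w"
  shows "is_vector_field (induced_field A)"
  unfolding is_vector_field_def
proof (intro conjI ballI allI impI)
  fix z :: "complex^'n" assume z: "z \<in> sphere_pts"
  show "herm z (induced_field A z) = 0"
    by (simp add: induced_field_def herm_diff_right herm_smult_right herm_self_sphere[OF z])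
  fix c :: complex assume c: "norm c = 1"
  have cc: "cnj c * c = 1"
    using c by (metis complex_norm_square mult.commute of_real_1 power_one)
  show "induced_field A (c *s z) = c *s induced_field A z"
    by (simp add: induced_field_def cl herm_smult_left herm_smult_right vector_ssub_ldistrib
        vector_smult_assoc mult.assoc[symmetric] cc)
next
  let ?D = "\<lambda>z. Blinfun (induced_field_deriv A z)"
  have apply_D: "blinfun_apply (?D z) = induced_field_deriv A z" for z
    by (rule bounded_linear_Blinfun_apply[OF has_derivative_bounded_linear
          [OF induced_field_has_derivative[OF lin]]])
  have "continuous_on sphere_pts ?D"
  proof (rule continuous_on_blinfun_componentwise)
    fix i :: "complex^'n"
    have "continuous_on sphere_pts (\<lambda>z. induced_field_deriv A z i)"
      unfolding induced_field_deriv_def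
      by (intro continuous_intros bounded_bilinear.continuous_on[OF bounded_bilinear_herm]
          bounded_bilinear.continuous_on[OF bounded_bilinear_smult] linear_continuous_on lin)
    then show "continuous_on sphere_pts (\<lambda>z. blinfun_apply (?D z) i)"
      by (simp add: apply_D)
  qed
  then show "\<exists>D. (\<forall>z\<in>sphere_pts. (induced_field A has_derivative blinfun_apply (D z)) (at z))
                 \<and> continuous_on sphere_pts D"
    using induced_field_has_derivative[OF lin] by (intro exI[of _ ?D]) (simp add: apply_D)
qed

lemma cov_induced_field_skew:
  fixes A :: "complex^'n \<Rightarrow> complex^'n"
  assumes lin: "bounded_linear A"
    and skew: "\<And>w w'. herm (A w) w' = - herm w (A w')"
    and X: "herm z X = 0" and Y: "herm z Y = 0"
  shows "inner (cov (induced_field A) z X) Y + inner (cov (induced_field A) z Y) X = 0"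
proof -
  define l where "l = herm z (A z)"
  have "cnj l = - l"
    unfolding l_def using skew[of z z] cnj_herm[of z "A z"] by simp
  then have Re_l: "Re l = 0"
    by (metis add.inverse_neutral cnj.sel(1) equation_minus_iff uminus_complex.sel(1) neg_equal_zero)
  have inner_hproj: "inner (hproj z W) V = Re (herm W V)" if "herm z V = 0" for W V
    using that by (simp add: inner_herm hproj_def herm_diff_left herm_smult_left)
  have "inner (cov (induced_field A) z X) Y = Re (herm (A X) Y) - Re (cnj l * herm X Y)"
    using Y by (simp add: cov_induced_field[OF lin] inner_hproj induced_field_deriv_def
        herm_diff_left herm_add_left herm_smult_left l_def)
  moreover have "inner (cov (induced_field A) z Y) X = Re (herm (A Y) X) - Re (cnj l * herm Y X)"
    using X by (simp add: cov_induced_field[OF lin] inner_hproj induced_field_deriv_def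
        herm_diff_left herm_add_left herm_smult_left l_def)
  moreover have "herm (A Y) X = - cnj (herm (A X) Y)"
    using skew[of Y X] cnj_herm[of "A X" Y] cnj_herm[of X "A Y"] by simp
  moreover have "herm Y X = cnj (herm X Y)"
    by (simp add: cnj_herm)
  ultimately show ?thesis
    using Re_l by simp
qed

lemma is_killing_induced_field:
  fixes A :: "complex^'n \<Rightarrow> complex^'n"
  assumes "bounded_linear A" and "\<And>a w. A (a *s w) = a *s A w"
    and "\<And>w w'. herm (A w) w' = - herm w (A w')"
  shows "is_killing (induced_field A)"
  unfolding is_killing_def horiz_def
  using is_vector_field_induced_field[OF assms(1,2)] cov_induced_field_skew[OF assms(1,3)]
  by auto

lemma cov_induced_field_at_zero:
  assumes "bounded_linear A" and "A z = 0" and "\<And>h. herm z (A h) = 0"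
  shows "cov (induced_field A) z h = A h"
  using assms by (simp add: cov_induced_field induced_field_deriv_def hproj_def herm_diff_right)

lemma nabla_norm_induced_field_at_zero:
  assumes lin: "bounded_linear A" and cl: "\<And>a w. A (a *s w) = a *s A w"
    and Az: "A z = 0" and hA: "\<And>h. herm z (A h) = 0"
  shows "nabla_norm (induced_field A) z = sqrt (\<Sum>b\<in>Basis. (norm (A b))\<^sup>2)"
proof -
  have "A (hproj z b) = A b" for b
    using linear_diff[OF bounded_linear.linear[OF lin]] by (simp add: hproj_def cl Az)
  then show ?thesis
    by (simp add: nabla_norm_def cov_induced_field_at_zero[OF lin Az hA])
qed

subsection \<open>Rank-two skew-Hermitian operators\<close>

text \<open>rot r u p w = r (\<langle>u,w\<rangle> p - \<langle>p,w\<rangle> u): the element r (p u* - u p*) of u(N+1).\<close>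

definition rot :: "real \<Rightarrow> complex^'n \<Rightarrow> complex^'n \<Rightarrow> complex^'n \<Rightarrow> complex^'n" where
  "rot r u p w = r *\<^sub>R (herm u w *s p - herm p w *s u)"

lemma bounded_linear_rot: "bounded_linear (rot r u p)"
  unfolding linear_conv_bounded_linear[symmetric] rot_def
  by (intro linearI) (simp_all add: herm_add_right herm_scaleR_right vec_eq_iff
      vector_scaleR_component algebra_simps)

lemma rot_smult: "rot r u p (a *s w) = a *s rot r u p w"
  by (simp add: rot_def herm_smult_right vec_eq_iff vector_scaleR_component algebra_simps)

lemma rot_skew: "herm (rot r u p w) w' = - herm w (rot r u p w')"
  by (simp add: rot_def herm_scaleR_left herm_scaleR_right herm_diff_left herm_diff_right
      herm_smult_left herm_smult_right cnj_herm algebra_simps)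

lemma rot_horizontal:
  assumes "herm z u = 0" and "herm z p = 0"
  shows "rot r u p z = 0" and "herm z (rot r u p h) = 0"
  using assms cnj_herm[of z u] cnj_herm[of z p]
  by (simp_all add: rot_def herm_scaleR_right herm_diff_right herm_smult_right)

lemma herm_rot_left:
  "herm (rot r u p x) y = r *\<^sub>R (herm x u * herm p y - herm x p * herm u y)"
  by (simp add: rot_def herm_scaleR_left herm_diff_left herm_smult_left cnj_herm)

lemma hilbert_schmidt_sum:
  fixes f g :: "nat \<Rightarrow> 'a::euclidean_space"
  shows "(\<Sum>b\<in>Basis. (norm (\<Sum>k<n. inner (f k) b *\<^sub>R g k))\<^sup>2)
       = (\<Sum>k<n. \<Sum>l<n. inner (f k) (f l) * inner (g k) (g l))"
proof -
  have sq: "(norm (\<Sum>k<n. inner (f k) b *\<^sub>R g k))\<^sup>2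
          = (\<Sum>k<n. \<Sum>l<n. inner (f k) b * (inner (f l) b * inner (g l) (g k)))" for b
    by (simp only: power2_norm_eq_inner inner_sum_left inner_sum_right inner_scaleR_left
        inner_scaleR_right sum_distrib_left)
  have "(\<Sum>b\<in>Basis. (norm (\<Sum>k<n. inner (f k) b *\<^sub>R g k))\<^sup>2)
      = (\<Sum>k<n. \<Sum>l<n. inner (g l) (g k) * (\<Sum>b\<in>Basis. inner (f k) b * inner (f l) b))"
    unfolding sq by (subst sum.swap) (simp add: sum_distrib_left mult_ac sum.swap[of _ Basis])
  also have "\<dots> = (\<Sum>k<n. \<Sum>l<n. inner (f k) (f l) * inner (g k) (g l))"
    by (intro sum.cong refl) (metis euclidean_inner inner_commute mult.commute)
  finally show ?thesis .
qed

text \<open>Writing \<langle>u,w\<rangle> = \<langle>u,w\<rangle>_R + i \<langle>J u,w\<rangle>_R expresses rot as such a real sum, whence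
  its Hilbert-Schmidt norm.\<close>

lemma rot_hilbert_schmidt:
  "(\<Sum>b\<in>Basis. (norm (rot r u p b))\<^sup>2)
     = 4 * r\<^sup>2 * (inner u u * inner p p - (inner u p)\<^sup>2 + (inner (JFS u) p)\<^sup>2)"
proof -
  define F where "F k = [u, JFS u, p, JFS p] ! k" for k
  define G where "G k = r *\<^sub>R ([p, JFS p, - u, - JFS u] ! k)" for k
  have "rot r u p b = (\<Sum>k<4. inner (F k) b *\<^sub>R G k)" for b
    by (simp add: rot_def smult_decomp herm_eq F_def G_def numeral_eq_Suc algebra_simps)
  then have "(\<Sum>b\<in>Basis. (norm (rot r u p b))\<^sup>2) = (\<Sum>k<4. \<Sum>l<4. inner (F k) (F l) * inner (G k) (G l))"
    by (simp add: hilbert_schmidt_sum)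
  also have "\<dots> = 4 * r\<^sup>2 * (inner u u * inner p p - (inner u p)\<^sup>2 + (inner (JFS u) p)\<^sup>2)"
  proof -
    have "inner u (JFS p) = - inner (JFS u) p" "inner p (JFS u) = inner (JFS u) p"
      "inner (JFS u) u = 0" "inner (JFS p) p = 0" "inner (JFS p) u = - inner (JFS u) p"
      using inner_J_swap[of u p] inner_J_swap[of p u] inner_J_self[of u] inner_J_self[of p]
        inner_J_swap[of u u] inner_J_swap[of p p] by (simp_all add: inner_commute)
    then show ?thesis
      by (simp add: F_def G_def numeral_eq_Suc inner_JJ inner_J_self inner_commute[of p u]
          power2_eq_square algebra_simps)
  qed
  finally show ?thesis .
qed

subsection \<open>The adapted frame\<close>

text \<open>For the frame of the theorem (only J e1 and J e3 are needed), rot r e1 e3 takes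
  the value 2r on the functional A \<mapsto> \<langle>A e1, e3\<rangle> + \<langle>A e2, e4\<rangle>: the two terms are r (1 + sin^2 \<alpha>) and r cos^2 \<alpha>.\<close>

lemma rot_frame_value:
  fixes e1 e2 e3 e4 :: "complex^'n"
  assumes "inner e1 e1 = 1" "inner e2 e2 = 1" "inner e3 e3 = 1" "inner e4 e4 = 1"
    and "inner e1 e2 = 0" "inner e1 e3 = 0" "inner e1 e4 = 0"
    and "inner e2 e3 = 0" "inner e2 e4 = 0" "inner e3 e4 = 0"
    and J1: "JFS e1 = cos \<alpha> *\<^sub>R e2 + sin \<alpha> *\<^sub>R e3"
    and J3: "JFS e3 = - sin \<alpha> *\<^sub>R e1 + cos \<alpha> *\<^sub>R e4"
  shows "inner (rot r e1 e3 e1) e3 + inner (rot r e1 e3 e2) e4 = 2 * r"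
proof -
  have "inner e2 e1 = 0" "inner e3 e1 = 0" "inner e4 e1 = 0"
    "inner e3 e2 = 0" "inner e4 e2 = 0" "inner e4 e3 = 0"
    using assms(5-10) by (simp_all add: inner_commute)
  with assms(1-10) have "inner (JFS e1) e1 = 0" "inner (JFS e1) e2 = cos \<alpha>" "inner (JFS e1) e3 = sin \<alpha>"
    "inner (JFS e1) e4 = 0" "inner (JFS e3) e3 = 0" "inner (JFS e3) e4 = cos \<alpha>"
    unfolding J1 J3 by (simp_all add: inner_add_left inner_diff_left)
  then have herm_vals: "herm e1 e1 = 1" "herm e3 e3 = 1" "herm e1 e3 = \<i> * sin \<alpha>"
    "herm e1 e2 = \<i> * cos \<alpha>" "herm e1 e4 = 0" "herm e3 e4 = \<i> * cos \<alpha>"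
    using assms(1-10) by (simp_all add: herm_eq complex_eq_iff)
  moreover have "herm e3 e1 = - \<i> * sin \<alpha>" "herm e2 e1 = - \<i> * cos \<alpha>"
    using herm_vals(3,4) cnj_herm[of e1 e3] cnj_herm[of e1 e2] by simp_all
  ultimately have "inner (rot r e1 e3 e1) e3 = r * (1 + (sin \<alpha>)\<^sup>2)"
    and "inner (rot r e1 e3 e2) e4 = r * (cos \<alpha>)\<^sup>2"
    by (simp_all add: inner_herm herm_rot_left power2_eq_square)
  then show ?thesis
    by (simp add: algebra_simps flip: distrib_left)
qed

text \<open>For the same frame, |rot r e1 e3|^2 = 4 r^2 (1 + sin^2 \<alpha>), since \<langle>J e1, e3\<rangle> = sin \<alpha>.\<close>

lemma rot_frame_hilbert_schmidt:
  fixes e1 e2 e3 :: "complex^'n"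
  assumes "inner e1 e1 = 1" "inner e3 e3 = 1" "inner e1 e3 = 0" "inner e2 e3 = 0"
    and "JFS e1 = cos \<alpha> *\<^sub>R e2 + sin \<alpha> *\<^sub>R e3"
  shows "(\<Sum>b\<in>Basis. (norm (rot r e1 e3 b))\<^sup>2) = 4 * r\<^sup>2 * (1 + (sin \<alpha>)\<^sup>2)"
  using assms by (simp add: rot_hilbert_schmidt inner_add_left)

lemma sqrt_one_plus_sin_sq_bounds:
  "sqrt 2 / 2 \<le> sqrt (1 + (sin \<alpha>)\<^sup>2) \<and> sqrt (1 + (sin \<alpha>)\<^sup>2) \<le> sqrt 2"
proof
  have "sqrt 2 / 2 \<le> 1"
    using sqrt2_less_2 by simp
  also have "1 \<le> sqrt (1 + (sin \<alpha>)\<^sup>2)"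
    by simp
  finally show "sqrt 2 / 2 \<le> sqrt (1 + (sin \<alpha>)\<^sup>2)" .
  show "sqrt (1 + (sin \<alpha>)\<^sup>2) \<le> sqrt 2"
    using abs_square_le_1[THEN iffD2, OF abs_sin_le_one[of \<alpha>]] by simp
qed

theorem lemma4p2:
  fixes z e1 e2 e3 e4 :: "complex^'n" and \<alpha> :: real
  assumes "z \<in> sphere_pts"
    and "0 \<le> \<alpha>" and "\<alpha> \<le> pi"
    and "e1 \<in> horiz z" "e2 \<in> horiz z" "e3 \<in> horiz z" "e4 \<in> horiz z"
    and "inner e1 e1 = 1" "inner e2 e2 = 1" "inner e3 e3 = 1" "inner e4 e4 = 1"
    and "inner e1 e2 = 0" "inner e1 e3 = 0" "inner e1 e4 = 0"
    and "inner e2 e3 = 0" "inner e2 e4 = 0" "inner e3 e4 = 0"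
    and "JFS e1 = cos \<alpha> *\<^sub>R e2 + sin \<alpha> *\<^sub>R e3"
    and "JFS e2 = - cos \<alpha> *\<^sub>R e1 - sin \<alpha> *\<^sub>R e4"
    and "JFS e3 = - sin \<alpha> *\<^sub>R e1 + cos \<alpha> *\<^sub>R e4"
  shows "(\<exists>V. is_killing V \<and>
            inner (cov V z e1) e3 + inner (cov V z e2) e4 = 1 \<and>
            sqrt 2 / 2 \<le> nabla_norm V z \<and> nabla_norm V z \<le> sqrt 2)
       \<and> (\<forall>c::real. \<exists>V. is_killing V \<and>
            inner (cov V z e1) e3 + inner (cov V z e2) e4 = c)"
proof -
  define V where "V r = induced_field (rot r e1 e3)" for r
  have "herm z e1 = 0" "herm z e3 = 0"
    using assms(4,6) by (simp_all add: horiz_def)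
  note rot_at_z = rot_horizontal[OF this]
  have killing: "is_killing (V r)" for r
    unfolding V_def by (rule is_killing_induced_field[OF bounded_linear_rot rot_smult rot_skew])
  have target: "inner (cov (V r) z e1) e3 + inner (cov (V r) z e2) e4 = 2 * r" for r
    unfolding V_def cov_induced_field_at_zero[OF bounded_linear_rot rot_at_z]
    using rot_frame_value[OF assms(8-17,18,20)] .
  have "nabla_norm (V (1/2)) z = sqrt (1 + (sin \<alpha>)\<^sup>2)"
    unfolding V_def nabla_norm_induced_field_at_zero[OF bounded_linear_rot rot_smult rot_at_z]
      rot_frame_hilbert_schmidt[OF assms(8,10,13,15,18)] by (simp add: power2_eq_square)
  then have "is_killing (V (1/2)) \<and> inner (cov (V (1/2)) z e1) e3 + inner (cov (V (1/2)) z e2) e4 = 1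
      \<and> sqrt 2 / 2 \<le> nabla_norm (V (1/2)) z \<and> nabla_norm (V (1/2)) z \<le> sqrt 2"
    using killing target[of "1/2"] sqrt_one_plus_sin_sq_bounds[of \<alpha>] by simp
  moreover have "is_killing (V (c/2)) \<and> inner (cov (V (c/2)) z e1) e3 + inner (cov (V (c/2)) z e2) e4 = c"
    for c
    using killing target[of "c/2"] by simp
  ultimately show ?thesis
    by blast
qed

end
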